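(* There exists a two-qubit computation $U\in U(4)$ such that every circuit of elementary gates implementing $U$ up to global phase contains at least $17$ gates; in particular, it contains at least $15$ one-qubit rotation gates and at least $2$ CNOT gates.
   Context: Two-qubit computations are $4\times4$ unitary matrices with respect to the computational basis $|00\rangle,|01\rangle,|10\rangle,|11\rangle$. The elementary gates are the $4\times 4$ matrices of the following forms: the one-qubit rotations $R_y(\theta)\otimes \mathbf{1}$, $\mathbf{1}\otimes R_y(\theta)$, $R_z(\alpha)\otimes\mathbf{1}$, $\mathbf{1}\otimes R_z(\alpha)$, where $R_y(\theta)=\begin{pmatrix}\cos\theta/2 & \sin\theta/2\\ -\sin\theta/2 & \cos\theta/2\end{pmatrix}$ and $R_z(\alpha)=\mathrm{diag}(e^{-i\alpha/2},e^{i\alpha/2})$ with $\theta,\alpha$ real; and the two CNOT gates, namely the permutation matrix swapping $|10\rangle\leftrightarrow|11\rangle$ and the permutation matrix swapping $|01\rangle\leftrightarrow|11\rangle$. A circuit computes the product of its gate matrices; it implements $U$ up to global phase if this product equals $cU$ for some $c\in\mathbb{C}$ with $|c|=1$. *)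

theory Defs
  imports Complex_Main "Jordan_Normal_Form.Matrix"
begin

(* Two-qubit computations: 4x4 complex matrices w.r.t. basis |00>,|01>,|10>,|11>
   = indices 0,1,2,3 (index 2*q1 + q2). *)

definition Ry :: "real \<Rightarrow> complex mat" where
  "Ry \<theta> = mat_of_rows_list 2
     [[complex_of_real (cos (\<theta>/2)), complex_of_real (sin (\<theta>/2))],
      [complex_of_real (- sin (\<theta>/2)), complex_of_real (cos (\<theta>/2))]]"

definition Rz :: "real \<Rightarrow> complex mat" where
  "Rz \<alpha> = mat_of_rows_list 2
     [[exp (- \<i> * complex_of_real (\<alpha>/2)), 0],
      [0, exp (\<i> * complex_of_real (\<alpha>/2))]]"

definition kron2 :: "complex mat \<Rightarrow> complex mat \<Rightarrow> complex mat" where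
  "kron2 A B = mat 4 4 (\<lambda>(i,j). A $$ (i div 2, j div 2) * B $$ (i mod 2, j mod 2))"

definition perm4 :: "(nat \<Rightarrow> nat) \<Rightarrow> complex mat" where
  "perm4 p = mat 4 4 (\<lambda>(i,j). if i = p j then 1 else 0)"

datatype gate =
    RY1 real
  | RY2 real
  | RZ1 real
  | RZ2 real
  | CNOT1      (* swaps |10> and |11> *)
  | CNOT2      (* swaps |01> and |11> *)

fun gate_mat :: "gate \<Rightarrow> complex mat" where
  "gate_mat (RY1 t) = kron2 (Ry t) (1\<^sub>m 2)"
| "gate_mat (RY2 t) = kron2 (1\<^sub>m 2) (Ry t)"
| "gate_mat (RZ1 a) = kron2 (Rz a) (1\<^sub>m 2)"
| "gate_mat (RZ2 a) = kron2 (1\<^sub>m 2) (Rz a)"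
| "gate_mat CNOT1 = perm4 (Transposition.transpose 2 3)"
| "gate_mat CNOT2 = perm4 (Transposition.transpose 1 3)"

fun is_cnot :: "gate \<Rightarrow> bool" where
  "is_cnot CNOT1 = True"
| "is_cnot CNOT2 = True"
| "is_cnot _ = False"

definition circuit_mat :: "gate list \<Rightarrow> complex mat" where
  "circuit_mat c = foldr (\<lambda>g M. gate_mat g * M) c (1\<^sub>m 4)"

definition implements_up_to_phase :: "gate list \<Rightarrow> complex mat \<Rightarrow> bool" where
  "implements_up_to_phase c U \<longleftrightarrow> (\<exists>z::complex. cmod z = 1 \<and> circuit_mat c = z \<cdot>\<^sub>m U)"

definition adjoint4 :: "complex mat \<Rightarrow> complex mat" where
  "adjoint4 U = mat (dim_col U) (dim_row U) (\<lambda>(i,j). cnj (U $$ (j,i)))"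

definition unitary4 :: "complex mat \<Rightarrow> bool" where
  "unitary4 U \<longleftrightarrow> U \<in> carrier_mat 4 4 \<and> U * adjoint4 U = 1\<^sub>m 4"

end

theory Submission
  imports Defs "HOL-Analysis.Analysis" "Jordan_Normal_Form.Determinant"
begin

text \<open>
  Write \<open>\<Sigma> = \<sigma>\<^sub>y \<otimes> \<sigma>\<^sub>y\<close> and \<open>\<gamma>(U) = U \<Sigma> U\<^sup>T \<Sigma>\<close>. Since \<open>A \<sigma>\<^sub>y A\<^sup>T = \<sigma>\<^sub>y\<close> for \<open>A \<in> SU(2)\<close>,
  a one-qubit rotation applied after \<open>U\<close> conjugates \<open>\<gamma>(U)\<close> and one applied before \<open>U\<close> leaves
  it unchanged. Hence a circuit without CNOT has \<open>tr \<gamma> = tr \<gamma>\<^sup>2 = 4\<close>, and a circuit with one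
  CNOT has \<open>tr \<gamma> = tr \<gamma>(CNOT) = 0\<close>. A global phase \<open>z\<close> multiplies these traces by \<open>z\<^sup>2\<close> and
  \<open>z\<^sup>4\<close>, so a unitary with \<open>tr \<gamma> \<noteq> 0\<close> and \<open>(tr \<gamma>)\<^sup>2 \<noteq> 4 tr \<gamma>\<^sup>2\<close> needs two CNOTs.

  The bound on rotations is a dimension count. For a fixed pattern of gate types, circuits with
  at most 14 rotations, times a global phase, form a differentiable family with 15 real
  parameters, while \<open>U(4)\<close> has dimension 16. The Cayley transform identifies an open part of
  \<open>U(4)\<close> with the 16-dimensional space of Hermitian matrices, so the countably many families
  have negligible image there. The unitaries satisfying the two trace conditions form a
  nonempty open set, which therefore contains a point outside all these images.
\<close>

lemma smult_smult_mat: "a \<cdot>\<^sub>m (b \<cdot>\<^sub>m A) = (a * b) \<cdot>\<^sub>m (A :: 'a::semigroup_mult mat)"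
  by (rule eq_matI) (auto simp: mult.assoc)

lemma one_smult_mat [simp]: "(1 :: 'a::monoid_mult) \<cdot>\<^sub>m A = A"
  by (rule eq_matI) auto

lemma transpose_smult_mat: "transpose_mat (a \<cdot>\<^sub>m A) = a \<cdot>\<^sub>m transpose_mat A"
  by (rule eq_matI) auto

lemma det_nonzero_mult_left_cancel:
  fixes P :: "'a::field mat"
  assumes P: "P \<in> carrier_mat n n" and X: "X \<in> carrier_mat n m" and Y: "Y \<in> carrier_mat n m"
    and det: "det P \<noteq> 0" and eq: "P * X = P * Y"
  shows "X = Y"
proof -
  have "Z = inverse (det P) \<cdot>\<^sub>m (adj_mat P * (P * Z))" if Z: "Z \<in> carrier_mat n m" for Z
  proof -
    have "adj_mat P * (P * Z) = (adj_mat P * P) * Z"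
      using P Z adj_mat(1)[OF P] by (simp add: assoc_mult_mat[of _ n n _ n _ m])
    also have "\<dots> = det P \<cdot>\<^sub>m Z"
      using P Z by (simp add: adj_mat(3)[OF P] mult_smult_assoc_mat[of _ n n _ m])
    finally show ?thesis using det by (simp add: smult_smult_mat)
  qed
  then show ?thesis using X Y eq by metis
qed

lemma det_nonzero_mult_right_cancel:
  fixes Q :: "'a::field mat"
  assumes Q: "Q \<in> carrier_mat n n" and X: "X \<in> carrier_mat m n" and Y: "Y \<in> carrier_mat m n"
    and det: "det Q \<noteq> 0" and eq: "X * Q = Y * Q"
  shows "X = Y"
proof -
  have "Z = inverse (det Q) \<cdot>\<^sub>m (Z * Q * adj_mat Q)" if Z: "Z \<in> carrier_mat m n" for Z
  proof -
    have "Z * Q * adj_mat Q = Z * (Q * adj_mat Q)"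
      using Q Z adj_mat(1)[OF Q] by (simp add: assoc_mult_mat[of _ m n _ n _ n])
    also have "\<dots> = det Q \<cdot>\<^sub>m Z"
      using Q Z by (simp add: adj_mat(2)[OF Q] mult_smult_distrib[of _ m n _ n])
    finally show ?thesis using det by (simp add: smult_smult_mat)
  qed
  then show ?thesis using X Y eq by metis
qed

definition mat_trace :: "'a::comm_monoid_add mat \<Rightarrow> 'a" where
  "mat_trace A = (\<Sum>i<dim_row A. A $$ (i,i))"

lemma mat_trace_mult_comm:
  fixes A :: "'a::comm_semiring_0 mat"
  assumes "A \<in> carrier_mat n m" "B \<in> carrier_mat m n"
  shows "mat_trace (A * B) = mat_trace (B * A)"
proof -
  have "mat_trace (A * B) = (\<Sum>i<n. \<Sum>k<m. A $$ (i,k) * B $$ (k,i))"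
    using assms by (simp add: mat_trace_def scalar_prod_def atLeast0LessThan)
  also have "\<dots> = (\<Sum>k<m. \<Sum>i<n. B $$ (k,i) * A $$ (i,k))"
    by (subst sum.swap) (simp add: mult.commute)
  also have "\<dots> = mat_trace (B * A)"
    using assms by (simp add: mat_trace_def scalar_prod_def atLeast0LessThan)
  finally show ?thesis .
qed

lemma mat_trace_smult:
  "(A :: 'a::comm_semiring_0 mat) \<in> carrier_mat n n \<Longrightarrow> mat_trace (a \<cdot>\<^sub>m A) = a * mat_trace A"
  by (simp add: mat_trace_def sum_distrib_left)

lemma mat_trace_conjugate:
  fixes X :: "'a::comm_ring_1 mat"
  assumes "P \<in> carrier_mat n n" "Q \<in> carrier_mat n n" "X \<in> carrier_mat n n" "Q * P = 1\<^sub>m n"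
  shows "mat_trace (P * X * Q) = mat_trace X"
proof -
  have "mat_trace (P * X * Q) = mat_trace (Q * (P * X))"
    using assms by (intro mat_trace_mult_comm) auto
  also have "Q * (P * X) = X"
    using assms by (simp add: assoc_mult_mat[symmetric, of _ n n _ n _ n])
  finally show ?thesis .
qed

lemma conjugate_mult_conjugate:
  fixes X :: "'a::comm_ring_1 mat"
  assumes "P \<in> carrier_mat n n" "Q \<in> carrier_mat n n" "X \<in> carrier_mat n n" "Y \<in> carrier_mat n n"
    and "Q * P = 1\<^sub>m n"
  shows "(P * X * Q) * (P * Y * Q) = P * (X * Y) * Q"
proof -
  have "Q * (P * W) = W" if "W \<in> carrier_mat n n" for W
    using assms that by (simp add: assoc_mult_mat[symmetric, of _ n n _ n _ n])
  then show ?thesis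
    using assms by (simp add: assoc_mult_mat[of _ n n _ n _ n])
qed

lemma sum_lessThan_4: "(\<Sum>k<4. f k) = f 0 + f 1 + f 2 + (f (3::nat) :: 'a::comm_monoid_add)"
  by (simp add: eval_nat_numeral)

lemma all_less_4: "(\<forall>i<4. P i) \<longleftrightarrow> P 0 \<and> P 1 \<and> P 2 \<and> P (3::nat)"
  by (auto simp: eval_nat_numeral less_Suc_eq)

lemma index_mult_mat_4:
  "dim_col A = 4 \<Longrightarrow> dim_row B = 4 \<Longrightarrow> i < dim_row A \<Longrightarrow> j < dim_col B \<Longrightarrow>
   (A * B) $$ (i,j) = A $$ (i,0) * B $$ (0,j) + A $$ (i,1) * B $$ (1,j) +
     A $$ (i,2) * B $$ (2,j) + A $$ (i,3) * B $$ (3,j)"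
  by (simp add: scalar_prod_def atLeast0LessThan sum_lessThan_4)

lemma eq_mat_4I:
  assumes "dim_row A = 4" "dim_col A = 4" "dim_row B = 4" "dim_col B = 4"
    and "\<forall>i<4. \<forall>j<4. A $$ (i,j) = B $$ (i,j)"
  shows "A = B"
  using assms by (intro eq_matI) auto

lemma mult_carrier_mat_4 [simp]:
  "A \<in> carrier_mat 4 4 \<Longrightarrow> B \<in> carrier_mat 4 4 \<Longrightarrow> A * B \<in> carrier_mat 4 4"
  by (rule mult_carrier_mat)

lemma left_mult_one_mat_4 [simp]: "(A :: 'a::semiring_1 mat) \<in> carrier_mat 4 4 \<Longrightarrow> 1\<^sub>m 4 * A = A"
  by (rule left_mult_one_mat)

lemma right_mult_one_mat_4 [simp]: "(A :: 'a::semiring_1 mat) \<in> carrier_mat 4 4 \<Longrightarrow> A * 1\<^sub>m 4 = A"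
  by (rule right_mult_one_mat)

lemmas assoc_mult_mat_4 = assoc_mult_mat[of _ 4 4 _ 4 _ 4]

section \<open>Gates and the \<open>\<gamma>\<close> invariant\<close>

lemma gate_mat_carrier [simp]: "gate_mat g \<in> carrier_mat 4 4"
  by (cases g) (auto simp: kron2_def perm4_def)

definition sigma_y :: "complex mat" where
  "sigma_y = mat_of_rows_list 2 [[0, - \<i>], [\<i>, 0]]"

definition sigma_yy :: "complex mat" where
  "sigma_yy = kron2 sigma_y sigma_y"

fun gate_inverse :: "gate \<Rightarrow> gate" where
  "gate_inverse (RY1 t) = RY1 (- t)"
| "gate_inverse (RY2 t) = RY2 (- t)"
| "gate_inverse (RZ1 a) = RZ1 (- a)"
| "gate_inverse (RZ2 a) = RZ2 (- a)"
| "gate_inverse CNOT1 = CNOT1"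
| "gate_inverse CNOT2 = CNOT2"

lemmas gate_entry_simps =
  kron2_def Ry_def Rz_def sigma_yy_def sigma_y_def mat_of_rows_list_def perm4_def
  Transposition.transpose_def index_mult_mat_4 all_less_4

lemma of_real_sin_sq: "complex_of_real (sin x) * complex_of_real (sin x) =
  1 - complex_of_real (cos x) * complex_of_real (cos x)"
  by (metis of_real_1 of_real_diff of_real_mult sin_squared_eq power2_eq_square)

lemma local_gate_sigma_yy:
  "\<not> is_cnot g \<Longrightarrow> gate_mat g * sigma_yy * transpose_mat (gate_mat g) = sigma_yy"
  by (cases g; rule eq_mat_4I)
    (simp_all add: gate_entry_simps of_real_sin_sq del: index_mult_mat(1) flip: exp_add)

lemma local_gate_transpose_sigma_yy:
  "\<not> is_cnot g \<Longrightarrow> transpose_mat (gate_mat g) * sigma_yy = sigma_yy * gate_mat (gate_inverse g)"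
  by (cases g; rule eq_mat_4I)
    (simp_all add: gate_entry_simps of_real_sin_sq del: index_mult_mat(1) flip: exp_add)

lemma gate_inverse_mult: "gate_mat (gate_inverse g) * gate_mat g = 1\<^sub>m 4"
  by (cases g; rule eq_mat_4I)
    (simp_all add: gate_entry_simps of_real_sin_sq del: index_mult_mat(1) flip: exp_add)

lemma sigma_yy_carrier [simp]: "sigma_yy \<in> carrier_mat 4 4"
  by (simp add: sigma_yy_def kron2_def)

lemma sigma_yy_squared: "sigma_yy * sigma_yy = 1\<^sub>m 4"
  by (rule eq_mat_4I) (simp_all add: gate_entry_simps del: index_mult_mat(1))

lemma circuit_mat_Nil: "circuit_mat [] = 1\<^sub>m 4"
  by (simp add: circuit_mat_def)

lemma circuit_mat_Cons: "circuit_mat (g # c) = gate_mat g * circuit_mat c"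
  by (simp add: circuit_mat_def)

lemma circuit_mat_carrier [simp]: "circuit_mat c \<in> carrier_mat 4 4"
  by (induction c) (auto simp: circuit_mat_Nil circuit_mat_Cons)

lemma circuit_mat_append: "circuit_mat (c @ d) = circuit_mat c * circuit_mat d"
  by (induction c) (auto simp: circuit_mat_Nil circuit_mat_Cons assoc_mult_mat_4)

lemma circuit_inverse_mult: "circuit_mat (rev (map gate_inverse c)) * circuit_mat c = 1\<^sub>m 4"
proof (induction c)
  case Nil
  then show ?case by (simp add: circuit_mat_Nil)
next
  case (Cons g c)
  let ?R = "circuit_mat (rev (map gate_inverse c))"
  have "circuit_mat (rev (map gate_inverse (g # c))) * circuit_mat (g # c)
      = ?R * ((gate_mat (gate_inverse g) * gate_mat g) * circuit_mat c)"
    by (simp add: circuit_mat_append circuit_mat_Cons circuit_mat_Nil assoc_mult_mat_4)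
  also have "\<dots> = 1\<^sub>m 4"
    by (simp add: gate_inverse_mult Cons.IH)
  finally show ?case .
qed

definition gamma :: "complex mat \<Rightarrow> complex mat" where
  "gamma U = U * sigma_yy * transpose_mat U * sigma_yy"

lemma gamma_carrier [simp]: "U \<in> carrier_mat 4 4 \<Longrightarrow> gamma U \<in> carrier_mat 4 4"
  by (simp add: gamma_def)

lemma gamma_one: "gamma (1\<^sub>m 4) = 1\<^sub>m 4"
  by (simp add: gamma_def sigma_yy_squared)

lemma gamma_smult: "U \<in> carrier_mat 4 4 \<Longrightarrow> gamma (z \<cdot>\<^sub>m U) = (z * z) \<cdot>\<^sub>m gamma U"
  by (simp add: gamma_def transpose_smult_mat smult_smult_mat
      mult_smult_assoc_mat[of _ 4 4 _ 4] mult_smult_distrib[of _ 4 4 _ 4])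

lemma gamma_local_gate_left:
  assumes "\<not> is_cnot g" "U \<in> carrier_mat 4 4"
  shows "gamma (gate_mat g * U) = gate_mat g * gamma U * gate_mat (gate_inverse g)"
  using assms
  by (simp add: gamma_def transpose_mult[of _ 4 4 _ 4] assoc_mult_mat_4 local_gate_transpose_sigma_yy)

lemma gamma_local_gate_right:
  assumes "\<not> is_cnot g" "U \<in> carrier_mat 4 4"
  shows "gamma (U * gate_mat g) = gamma U"
proof -
  have "gate_mat g * (sigma_yy * (transpose_mat (gate_mat g) * X)) = sigma_yy * X"
    if "X \<in> carrier_mat 4 4" for X
    using that local_gate_sigma_yy[OF assms(1)] by (simp flip: assoc_mult_mat_4)
  then show ?thesis
    using assms(2) by (simp add: gamma_def transpose_mult[of _ 4 4 _ 4] assoc_mult_mat_4)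
qed

lemma gamma_local_circuit_left:
  assumes "\<forall>g\<in>set c. \<not> is_cnot g" "U \<in> carrier_mat 4 4"
  shows "gamma (circuit_mat c * U) = circuit_mat c * gamma U * circuit_mat (rev (map gate_inverse c))"
  using assms(1)
proof (induction c)
  case Nil
  then show ?case using assms(2) by (simp add: circuit_mat_Nil)
next
  case (Cons g c)
  let ?G = "gate_mat g" and ?C = "circuit_mat c"
  have "gamma (circuit_mat (g # c) * U) = ?G * gamma (?C * U) * gate_mat (gate_inverse g)"
    using Cons.prems assms(2)
    by (simp add: circuit_mat_Cons assoc_mult_mat_4 gamma_local_gate_left)
  also have "\<dots> = circuit_mat (g # c) * gamma U * circuit_mat (rev (map gate_inverse (g # c)))"
    using Cons assms(2)
    by (simp add: circuit_mat_Cons circuit_mat_append circuit_mat_Nil assoc_mult_mat_4)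
  finally show ?case .
qed

lemma gamma_local_circuit_right:
  "\<forall>g\<in>set c. \<not> is_cnot g \<Longrightarrow> U \<in> carrier_mat 4 4 \<Longrightarrow> gamma (U * circuit_mat c) = gamma U"
proof (induction c arbitrary: U)
  case Nil
  then show ?case by (simp add: circuit_mat_Nil)
next
  case (Cons g c)
  then show ?case
    by (simp add: circuit_mat_Cons gamma_local_gate_right flip: assoc_mult_mat_4)
qed

lemma trace_gamma_cnot: "is_cnot g \<Longrightarrow> mat_trace (gamma (gate_mat g)) = 0"
  by (cases g)
    (simp_all add: mat_trace_def gamma_def sum_lessThan_4 gate_entry_simps del: index_mult_mat(1))

lemma mat_trace_one_4: "mat_trace (1\<^sub>m 4 :: complex mat) = 4"
  by (simp add: mat_trace_def sum_lessThan_4)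

lemma local_circuit_gamma_traces:
  assumes "\<forall>g\<in>set c. \<not> is_cnot g"
  shows "mat_trace (gamma (circuit_mat c)) = 4"
    and "mat_trace (gamma (circuit_mat c) * gamma (circuit_mat c)) = 4"
proof -
  let ?C = "circuit_mat c" and ?R = "circuit_mat (rev (map gate_inverse c))"
  have conj: "mat_trace (?C * X * ?R) = mat_trace X" if "X \<in> carrier_mat 4 4" for X
    by (rule mat_trace_conjugate[OF _ _ that circuit_inverse_mult]) simp_all
  have gamma_C: "gamma ?C = ?C * 1\<^sub>m 4 * ?R"
    using gamma_local_circuit_left[OF assms, of "1\<^sub>m 4"] by (simp add: gamma_one)
  have "gamma ?C * gamma ?C = ?C * (1\<^sub>m 4 * 1\<^sub>m 4) * ?R"
    unfolding gamma_C by (rule conjugate_mult_conjugate[OF _ _ _ _ circuit_inverse_mult]) simp_all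
  then show "mat_trace (gamma ?C * gamma ?C) = 4"
    using conj[of "1\<^sub>m 4 * 1\<^sub>m 4"] by (simp add: mat_trace_one_4)
  show "mat_trace (gamma ?C) = 4"
    using conj[of "1\<^sub>m 4"] by (simp add: gamma_C mat_trace_one_4)
qed

lemma one_cnot_circuit_gamma_trace:
  assumes "is_cnot x" "\<forall>g\<in>set l. \<not> is_cnot g" "\<forall>g\<in>set r. \<not> is_cnot g"
  shows "mat_trace (gamma (circuit_mat (l @ x # r))) = 0"
proof -
  have "gamma (circuit_mat (l @ x # r))
      = circuit_mat l * gamma (gate_mat x) * circuit_mat (rev (map gate_inverse l))"
    using gamma_local_circuit_left[OF assms(2)] gamma_local_circuit_right[OF assms(3)]
    by (simp add: circuit_mat_append circuit_mat_Cons)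
  also have "mat_trace \<dots> = mat_trace (gamma (gate_mat x))"
    by (rule mat_trace_conjugate[OF _ _ _ circuit_inverse_mult]) simp_all
  finally show ?thesis
    using trace_gamma_cnot[OF assms(1)] by simp
qed

lemma gamma_traces_at_most_one_cnot:
  assumes "length (filter is_cnot c) \<le> 1"
  obtains "mat_trace (gamma (circuit_mat c)) = 4"
    and "mat_trace (gamma (circuit_mat c) * gamma (circuit_mat c)) = 4"
  | "mat_trace (gamma (circuit_mat c)) = 0"
proof (cases "filter is_cnot c")
  case Nil
  then have "\<forall>g\<in>set c. \<not> is_cnot g"
    by (simp add: filter_empty_conv)
  then show ?thesis using local_circuit_gamma_traces that by blast
next
  case (Cons x xs)
  then obtain l r where "c = l @ x # r" "\<forall>g\<in>set l. \<not> is_cnot g" "is_cnot x" "xs = filter is_cnot r"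
    by (auto simp: filter_eq_Cons_iff)
  moreover have "filter is_cnot r = []"
    using assms Cons calculation(4) by simp
  ultimately show ?thesis
    using one_cnot_circuit_gamma_trace that by (simp add: filter_empty_conv)
qed

lemma two_cnots_needed:
  assumes U: "U \<in> carrier_mat 4 4"
    and trace: "mat_trace (gamma U) \<noteq> 0"
    and discr: "mat_trace (gamma U) ^ 2 \<noteq> 4 * mat_trace (gamma U * gamma U)"
    and impl: "implements_up_to_phase c U"
  shows "2 \<le> length (filter is_cnot c)"
proof (rule ccontr)
  assume "\<not> ?thesis"
  then have at_most_one: "length (filter is_cnot c) \<le> 1" by simp
  obtain z where z: "cmod z = 1" "circuit_mat c = z \<cdot>\<^sub>m U"
    using impl unfolding implements_up_to_phase_def by blast
  have "z \<noteq> 0" using z(1) by auto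
  have trace_c: "mat_trace (gamma (circuit_mat c)) = z\<^sup>2 * mat_trace (gamma U)"
    using U by (simp add: z(2) gamma_smult mat_trace_smult[of _ 4] power2_eq_square)
  have trace_sq_c: "mat_trace (gamma (circuit_mat c) * gamma (circuit_mat c))
      = z\<^sup>2 * z\<^sup>2 * mat_trace (gamma U * gamma U)"
    using U by (simp add: z(2) gamma_smult mat_trace_smult[of _ 4] power2_eq_square smult_smult_mat
        mult_smult_assoc_mat[of _ 4 4 _ 4] mult_smult_distrib[of _ 4 4 _ 4])
  show False
  proof (cases rule: gamma_traces_at_most_one_cnot[OF at_most_one])
    case 1
    then have "z\<^sup>2 * z\<^sup>2 * (mat_trace (gamma U) ^ 2 - 4 * mat_trace (gamma U * gamma U)) = 0"
      using trace_c trace_sq_c by (simp add: algebra_simps power2_eq_square)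
    then show False using \<open>z \<noteq> 0\<close> discr by simp
  next
    case 2
    then show False using trace_c \<open>z \<noteq> 0\<close> trace by simp
  qed
qed

section \<open>Differentiable matrix families\<close>

lemma differentiable_prod:
  fixes f :: "'i \<Rightarrow> 'a::real_normed_vector \<Rightarrow> 'b::real_normed_field"
  shows "finite A \<Longrightarrow> (\<And>a. a \<in> A \<Longrightarrow> f a differentiable (at y within T)) \<Longrightarrow>
    (\<lambda>y. \<Prod>a\<in>A. f a y) differentiable (at y within T)"
  by (induction A rule: finite_induct) auto

lemma differentiable_compose_field_derivative:
  "(g has_field_derivative D) (at (f y)) \<Longrightarrow> f differentiable (at y) \<Longrightarrow> (\<lambda>y. g (f y)) differentiable (at y)"
  by (metis differentiable_compose field_differentiable_def field_differentiable_imp_differentiable)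

lemma differentiable_compose_bounded_linear:
  "bounded_linear g \<Longrightarrow> f differentiable (at y) \<Longrightarrow> (\<lambda>y. g (f y)) differentiable (at y)"
  by (rule differentiable_compose[OF bounded_linear_imp_differentiable])

lemma continuous_on_differentiable_at:
  "(\<And>x. x \<in> S \<Longrightarrow> f differentiable (at x)) \<Longrightarrow> continuous_on S f"
  by (rule differentiable_imp_continuous_on[OF differentiable_at_imp_differentiable_on])

definition mat_differentiable :: "'a::real_normed_vector set \<Rightarrow> nat \<Rightarrow> ('a \<Rightarrow> 'b::real_normed_field mat) \<Rightarrow> bool" where
  "mat_differentiable S n F \<longleftrightarrow> (\<forall>y. F y \<in> carrier_mat n n) \<and>
     (\<forall>y\<in>S. \<forall>i<n. \<forall>j<n. (\<lambda>y. F y $$ (i,j)) differentiable (at y))"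

lemma mat_differentiable_entry:
  "mat_differentiable S n F \<Longrightarrow> y \<in> S \<Longrightarrow> i < n \<Longrightarrow> j < n \<Longrightarrow> (\<lambda>y. F y $$ (i,j)) differentiable (at y)"
  by (simp add: mat_differentiable_def)

lemma mat_differentiable_subset:
  "mat_differentiable T n F \<Longrightarrow> S \<subseteq> T \<Longrightarrow> mat_differentiable S n F"
  by (auto simp: mat_differentiable_def)

lemma mat_differentiable_const: "A \<in> carrier_mat n n \<Longrightarrow> mat_differentiable S n (\<lambda>y. A)"
  by (simp add: mat_differentiable_def)

lemma mat_differentiableI:
  assumes "\<And>y. F y \<in> carrier_mat n n"
    and "\<And>y i j. y \<in> S \<Longrightarrow> i < n \<Longrightarrow> j < n \<Longrightarrow> (\<lambda>y. F y $$ (i,j)) differentiable (at y)"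
  shows "mat_differentiable S n F"
  using assms by (simp add: mat_differentiable_def)

lemma mat_differentiable_carrier: "mat_differentiable S n F \<Longrightarrow> F y \<in> carrier_mat n n"
  by (simp add: mat_differentiable_def)

lemma mat_differentiable_dim:
  "mat_differentiable S n F \<Longrightarrow> dim_row (F y) = n"
  "mat_differentiable S n F \<Longrightarrow> dim_col (F y) = n"
  using carrier_matD[OF mat_differentiable_carrier] by blast+

lemma mat_differentiable_add:
  assumes F: "mat_differentiable S n F" and G: "mat_differentiable S n G"
  shows "mat_differentiable S n (\<lambda>y. F y + G y)"
proof (rule mat_differentiableI)
  fix y i j assume "y \<in> S" "i < n" "j < n"
  moreover have "(\<lambda>y. (F y + G y) $$ (i,j)) = (\<lambda>y. F y $$ (i,j) + G y $$ (i,j))"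
    using \<open>i < n\<close> \<open>j < n\<close> by (simp add: mat_differentiable_dim[OF G])
  ultimately show "(\<lambda>y. (F y + G y) $$ (i,j)) differentiable (at y)"
    using mat_differentiable_entry[OF F] mat_differentiable_entry[OF G] by simp
qed (use mat_differentiable_carrier[OF F] mat_differentiable_carrier[OF G] in simp)

lemma mat_differentiable_diff:
  assumes F: "mat_differentiable S n F" and G: "mat_differentiable S n G"
  shows "mat_differentiable S n (\<lambda>y. F y - G y)"
proof (rule mat_differentiableI)
  fix y i j assume "y \<in> S" "i < n" "j < n"
  moreover have "(\<lambda>y. (F y - G y) $$ (i,j)) = (\<lambda>y. F y $$ (i,j) - G y $$ (i,j))"
    using \<open>i < n\<close> \<open>j < n\<close> by (simp add: mat_differentiable_dim[OF G])
  ultimately show "(\<lambda>y. (F y - G y) $$ (i,j)) differentiable (at y)"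
    using mat_differentiable_entry[OF F] mat_differentiable_entry[OF G] by simp
qed (intro minus_carrier_mat mat_differentiable_carrier[OF G])

lemma mat_differentiable_smult:
  assumes F: "mat_differentiable S n F" and s: "\<And>y. y \<in> S \<Longrightarrow> s differentiable (at y)"
  shows "mat_differentiable S n (\<lambda>y. s y \<cdot>\<^sub>m F y)"
proof (rule mat_differentiableI)
  fix y i j assume "y \<in> S" "i < n" "j < n"
  moreover have "(\<lambda>y. (s y \<cdot>\<^sub>m F y) $$ (i,j)) = (\<lambda>y. s y * F y $$ (i,j))"
    using \<open>i < n\<close> \<open>j < n\<close> by (simp add: mat_differentiable_dim[OF F])
  ultimately show "(\<lambda>y. (s y \<cdot>\<^sub>m F y) $$ (i,j)) differentiable (at y)"
    using mat_differentiable_entry[OF F] s by simp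
qed (use mat_differentiable_carrier[OF F] in simp)

lemma mat_differentiable_transpose:
  assumes F: "mat_differentiable S n F"
  shows "mat_differentiable S n (\<lambda>y. transpose_mat (F y))"
proof (rule mat_differentiableI)
  fix y i j assume "y \<in> S" "i < n" "j < n"
  moreover have "(\<lambda>y. transpose_mat (F y) $$ (i,j)) = (\<lambda>y. F y $$ (j,i))"
    using \<open>i < n\<close> \<open>j < n\<close> by (simp add: mat_differentiable_dim[OF F])
  ultimately show "(\<lambda>y. transpose_mat (F y) $$ (i,j)) differentiable (at y)"
    using mat_differentiable_entry[OF F] by simp
qed (use mat_differentiable_carrier[OF F] in simp)

lemma mat_differentiable_mult:
  assumes F: "mat_differentiable S n F" and G: "mat_differentiable S n G"
  shows "mat_differentiable S n (\<lambda>y. F y * G y)"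
proof (rule mat_differentiableI)
  fix y i j assume "y \<in> S" "i < n" "j < n"
  moreover have "(\<lambda>y. (F y * G y) $$ (i,j)) = (\<lambda>y. \<Sum>k = 0..<n. F y $$ (i,k) * G y $$ (k,j))"
    using \<open>i < n\<close> \<open>j < n\<close>
    by (simp add: mat_differentiable_dim[OF F] mat_differentiable_dim[OF G] scalar_prod_def)
  ultimately show "(\<lambda>y. (F y * G y) $$ (i,j)) differentiable (at y)"
    using mat_differentiable_entry[OF F] mat_differentiable_entry[OF G] by simp
qed (rule mult_carrier_mat[OF mat_differentiable_carrier[OF F] mat_differentiable_carrier[OF G]])

lemma mat_differentiable_mat_delete:
  assumes F: "mat_differentiable S (Suc n) F" and "i < Suc n" "j < Suc n"
  shows "mat_differentiable S n (\<lambda>y. mat_delete (F y) i j)"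
proof (rule mat_differentiableI)
  fix y i' j' assume "y \<in> S" "i' < n" "j' < n"
  moreover have "(\<lambda>y. mat_delete (F y) i j $$ (i',j')) =
      (\<lambda>y. F y $$ (if i' < i then i' else Suc i', if j' < j then j' else Suc j'))"
    using \<open>i' < n\<close> \<open>j' < n\<close> by (simp add: mat_differentiable_dim[OF F] mat_delete_def)
  ultimately show "(\<lambda>y. mat_delete (F y) i j $$ (i',j')) differentiable (at y)"
    using mat_differentiable_entry[OF F] by simp
qed (use mat_delete_carrier[OF mat_differentiable_carrier[OF F]] in simp)

lemma differentiable_det:
  assumes F: "mat_differentiable S n F" and y: "y \<in> S"
  shows "(\<lambda>y. det (F y)) differentiable (at y)"
proof -
  have det_eq: "(\<lambda>y. det (F y)) =
      (\<lambda>y. \<Sum>p \<in> {p. p permutes {0..<n}}. signof p * (\<Prod>i = 0..<n. F y $$ (i, p i)))"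
    using mat_differentiable_carrier[OF F] by (intro ext det_def')
  have "(\<lambda>y. \<Sum>p \<in> {p. p permutes {0..<n}}. signof p * (\<Prod>i = 0..<n. F y $$ (i, p i)))
      differentiable (at y)"
  proof (intro differentiable_sum differentiable_mult differentiable_prod ballI differentiable_const)
    fix p i assume "p \<in> {p. p permutes {0..<n}}" "i \<in> {0..<n}"
    then show "(\<lambda>y. F y $$ (i, p i)) differentiable (at y)"
      using mat_differentiable_entry[OF F y] by (simp add: permutes_in_image)
  qed (simp_all add: finite_permutations)
  then show ?thesis
    unfolding det_eq .
qed

lemma mat_differentiable_adj_mat:
  assumes F: "mat_differentiable S n F"
  shows "mat_differentiable S n (\<lambda>y. adj_mat (F y))"
proof (rule mat_differentiableI)
  fix y i j assume "y \<in> S" "i < n" "j < n"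
  then obtain m where n: "n = Suc m" by (cases n) auto
  have "(\<lambda>y. adj_mat (F y) $$ (i,j)) = (\<lambda>y. (-1) ^ (j+i) * det (mat_delete (F y) j i))"
    using \<open>i < n\<close> \<open>j < n\<close> by (simp add: mat_differentiable_dim[OF F] adj_mat_def cofactor_def)
  moreover have "mat_differentiable S m (\<lambda>y. mat_delete (F y) j i)"
    using F \<open>i < n\<close> \<open>j < n\<close> unfolding n by (intro mat_differentiable_mat_delete)
  ultimately show "(\<lambda>y. adj_mat (F y) $$ (i,j)) differentiable (at y)"
    using differentiable_det \<open>y \<in> S\<close> by simp
qed (rule adj_mat(1)[OF mat_differentiable_carrier[OF F]])

lemma differentiable_mat_trace:
  assumes F: "mat_differentiable S n F" and y: "y \<in> S"
  shows "(\<lambda>y. mat_trace (F y)) differentiable (at y)"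
  using mat_differentiable_entry[OF F y]
  by (simp add: mat_trace_def mat_differentiable_dim[OF F])

lemma continuous_on_det:
  "mat_differentiable UNIV n F \<Longrightarrow> continuous_on UNIV (\<lambda>x. det (F x))"
  by (intro continuous_on_differentiable_at differentiable_det) auto

section \<open>Circuits with a fixed pattern of gates\<close>

fun set_angle :: "gate \<Rightarrow> real \<Rightarrow> gate" where
  "set_angle (RY1 _) t = RY1 t"
| "set_angle (RY2 _) t = RY2 t"
| "set_angle (RZ1 _) t = RZ1 t"
| "set_angle (RZ2 _) t = RZ2 t"
| "set_angle g _ = g"

fun gate_angle :: "gate \<Rightarrow> real" where
  "gate_angle (RY1 t) = t"
| "gate_angle (RY2 t) = t"
| "gate_angle (RZ1 t) = t"
| "gate_angle (RZ2 t) = t"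
| "gate_angle _ = 0"

definition angles :: "gate list \<Rightarrow> real list" where
  "angles c = map gate_angle (filter (\<lambda>g. \<not> is_cnot g) c)"

fun set_angles :: "gate list \<Rightarrow> (nat \<Rightarrow> real) \<Rightarrow> gate list" where
  "set_angles [] \<theta> = []"
| "set_angles (g # c) \<theta> =
    (if is_cnot g then g # set_angles c \<theta> else set_angle g (\<theta> 0) # set_angles c (\<lambda>k. \<theta> (Suc k)))"

lemma set_angles_angles:
  "(\<And>k. k < length (angles c) \<Longrightarrow> \<theta> k = angles c ! k) \<Longrightarrow> set_angles c \<theta> = c"
proof (induction c arbitrary: \<theta>)
  case Nil
  then show ?case by simp
next
  case (Cons g c)
  then show ?case
    by (cases g) (auto simp: angles_def nth_Cons_Suc intro!: Cons.IH)
qed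

lemma set_angles_erase: "set_angles (map (\<lambda>g. set_angle g 0) c) \<theta> = set_angles c \<theta>"
proof (induction c arbitrary: \<theta>)
  case (Cons g c)
  then show ?case by (cases g) auto
qed simp

lemma finite_erased_gates: "finite (range (\<lambda>g. set_angle g 0))"
proof -
  have "range (\<lambda>g. set_angle g 0) \<subseteq> {RY1 0, RY2 0, RZ1 0, RZ2 0, CNOT1, CNOT2}"
  proof
    fix x assume "x \<in> range (\<lambda>g. set_angle g 0)"
    then obtain g where "x = set_angle g 0" by auto
    then show "x \<in> {RY1 0, RY2 0, RZ1 0, RZ2 0, CNOT1, CNOT2}" by (cases g) auto
  qed
  then show ?thesis by (rule finite_subset) simp
qed

lemma mat_differentiable_rotation_gate:
  assumes "\<not> is_cnot g" and a: "\<And>y. a differentiable (at y)"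
  shows "mat_differentiable UNIV 4 (\<lambda>y. gate_mat (set_angle g (a y)))"
proof -
  have half: "(\<lambda>y. a y / 2) differentiable (at y)" for y
    using a by simp
  note compose_rules =
    differentiable_compose_bounded_linear[OF bounded_linear_of_real]
    differentiable_compose_field_derivative[OF DERIV_cos]
    differentiable_compose_field_derivative[OF DERIV_sin]
    differentiable_compose_field_derivative[OF DERIV_exp]
  show ?thesis
    using assms(1) unfolding mat_differentiable_def
    by (cases g) (simp_all add: all_less_4 gate_entry_simps compose_rules half a)
qed

lemma mat_differentiable_set_angles:
  assumes "\<And>k y. (\<lambda>y. \<Theta> y k) differentiable (at y)"
  shows "mat_differentiable UNIV 4 (\<lambda>y. circuit_mat (set_angles c (\<Theta> y)))"
  using assms
proof (induction c arbitrary: \<Theta>)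
  case Nil
  then show ?case by (simp add: circuit_mat_Nil mat_differentiable_const)
next
  case (Cons g c)
  have gate: "mat_differentiable UNIV 4 (\<lambda>y. gate_mat (if is_cnot g then g else set_angle g (\<Theta> y 0)))"
    using Cons.prems mat_differentiable_rotation_gate[of g "\<lambda>y. \<Theta> y 0"]
    by (cases "is_cnot g") (simp_all add: mat_differentiable_const)
  have "mat_differentiable UNIV 4
      (\<lambda>y. circuit_mat (set_angles c (if is_cnot g then \<Theta> y else (\<lambda>k. \<Theta> y (Suc k)))))"
    using Cons.IH[of "\<lambda>y. if is_cnot g then \<Theta> y else (\<lambda>k. \<Theta> y (Suc k))"] Cons.prems
    by (cases "is_cnot g") simp_all
  from mat_differentiable_mult[OF gate this] show ?case
    by (cases "is_cnot g") (simp_all add: circuit_mat_Cons)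
qed

definition coord15 :: "nat \<Rightarrow> 15" where
  "coord15 = (SOME h. bij_betw h {0..<15} UNIV)"

lemma bij_betw_coord15: "bij_betw coord15 {0..<15} UNIV"
proof -
  have "\<exists>h. bij_betw h {0..<15::nat} (UNIV :: 15 set)"
    using ex_bij_betw_nat_finite[of "UNIV :: 15 set"] by simp
  then show ?thesis
    unfolding coord15_def by (rule someI_ex)
qed

text \<open>Coordinate \<open>coord15 14\<close> is the global phase and the rotation angles are read from
  \<open>coord15 0, coord15 1, \<dots>\<close>; so only patterns with at most 14 rotations are parametrized
  faithfully, later angles reusing the phase or junk values of \<open>coord15\<close>.\<close>

definition circuit_family :: "gate list \<Rightarrow> real^15 \<Rightarrow> complex mat" where
  "circuit_family c y = cis (y $ coord15 14) \<cdot>\<^sub>m circuit_mat (set_angles c (\<lambda>k. y $ coord15 k))"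

lemma mat_differentiable_circuit_family: "mat_differentiable UNIV 4 (circuit_family c)"
proof -
  have coord: "(\<lambda>y::real^15. y $ i) differentiable (at y)" for i y
    by (rule bounded_linear_imp_differentiable[OF bounded_linear_vec_nth])
  have "(\<lambda>y. cis (y $ coord15 14)) differentiable (at y)" for y
    unfolding cis_conv_exp
    by (intro differentiable_compose_field_derivative[OF DERIV_exp] differentiable_mult
        differentiable_const differentiable_compose_bounded_linear[OF bounded_linear_of_real] coord)
  then show ?thesis
    unfolding circuit_family_def[abs_def]
    by (intro mat_differentiable_smult mat_differentiable_set_angles coord)
qed

lemma circuit_family_covers:
  assumes impl: "implements_up_to_phase c U"
    and few: "length (filter (\<lambda>g. \<not> is_cnot g) c) \<le> 14"
  shows "\<exists>y. circuit_family (map (\<lambda>g. set_angle g 0) c) y = U"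
proof -
  obtain z where z: "cmod z = 1" "circuit_mat c = z \<cdot>\<^sub>m U"
    using impl unfolding implements_up_to_phase_def by blast
  let ?inv = "the_inv_into {0..<15} coord15"
  define y :: "real^15" where
    "y = (\<chi> j. if ?inv j < 14 then (angles c @ replicate 14 0) ! ?inv j else - Arg z)"
  have inj: "inj_on coord15 {0..<15}"
    using bij_betw_coord15 by (simp add: bij_betw_def)
  have y_angles: "y $ coord15 k = angles c ! k" if "k < length (angles c)" for k
    using that few the_inv_into_f_f[OF inj, of k] by (simp add: y_def angles_def nth_append)
  have y_phase: "y $ coord15 14 = - Arg z"
    using the_inv_into_f_f[OF inj, of 14] by (simp add: y_def)
  have "z \<noteq> 0"
    using z(1) by auto
  then have "z = cis (Arg z)"
    using z(1) cis_Arg[of z] by (simp add: sgn_div_norm)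
  then have "cis (- Arg z) * z = 1"
    by (metis cis_mult cis_zero add.left_inverse)
  then have "circuit_family (map (\<lambda>g. set_angle g 0) c) y = U"
    by (simp add: circuit_family_def set_angles_erase set_angles_angles y_angles y_phase z(2)
        smult_smult_mat)
  then show ?thesis ..
qed

section \<open>The Cayley chart\<close>

type_synonym hcoords = "complex \<times> complex \<times> complex \<times> complex \<times> complex \<times> complex \<times> complex \<times> complex"

definition h01 :: "hcoords \<Rightarrow> complex" where "h01 x = fst x"
definition h02 :: "hcoords \<Rightarrow> complex" where "h02 x = fst (snd x)"
definition h03 :: "hcoords \<Rightarrow> complex" where "h03 x = fst (snd (snd x))"
definition h12 :: "hcoords \<Rightarrow> complex" where "h12 x = fst (snd (snd (snd x)))"
definition h13 :: "hcoords \<Rightarrow> complex" where "h13 x = fst (snd (snd (snd (snd x))))"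
definition h23 :: "hcoords \<Rightarrow> complex" where "h23 x = fst (snd (snd (snd (snd (snd x)))))"
definition hdiag01 :: "hcoords \<Rightarrow> complex" where "hdiag01 x = fst (snd (snd (snd (snd (snd (snd x))))))"
definition hdiag23 :: "hcoords \<Rightarrow> complex" where "hdiag23 x = snd (snd (snd (snd (snd (snd (snd x))))))"

lemmas hcoords_defs = h01_def h02_def h03_def h12_def h13_def h23_def hdiag01_def hdiag23_def

text \<open>A Hermitian \<open>4 \<times> 4\<close> matrix is determined by its six entries above the diagonal and its
  four real diagonal entries, which are packed pairwise into real and imaginary parts.\<close>

definition hermitian_of :: "hcoords \<Rightarrow> complex mat" where
  "hermitian_of x = mat_of_rows_list 4
    [[complex_of_real (Re (hdiag01 x)), h01 x, h02 x, h03 x],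
     [cnj (h01 x), complex_of_real (Im (hdiag01 x)), h12 x, h13 x],
     [cnj (h02 x), cnj (h12 x), complex_of_real (Re (hdiag23 x)), h23 x],
     [cnj (h03 x), cnj (h13 x), cnj (h23 x), complex_of_real (Im (hdiag23 x))]]"

definition cayley_plus :: "hcoords \<Rightarrow> complex mat" where
  "cayley_plus x = 1\<^sub>m 4 + \<i> \<cdot>\<^sub>m hermitian_of x"

definition cayley_minus :: "hcoords \<Rightarrow> complex mat" where
  "cayley_minus x = 1\<^sub>m 4 - \<i> \<cdot>\<^sub>m hermitian_of x"

definition cayley :: "hcoords \<Rightarrow> complex mat" where
  "cayley x = (1 / det (cayley_plus x)) \<cdot>\<^sub>m (cayley_minus x * adj_mat (cayley_plus x))"

definition inverse_cayley :: "complex mat \<Rightarrow> complex mat" where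
  "inverse_cayley U = (- \<i> / det (1\<^sub>m 4 + U)) \<cdot>\<^sub>m (adj_mat (1\<^sub>m 4 + U) * (1\<^sub>m 4 - U))"

definition cayley_coords :: "complex mat \<Rightarrow> hcoords" where
  "cayley_coords U = (let K = inverse_cayley U in
     (K $$ (0,1), K $$ (0,2), K $$ (0,3), K $$ (1,2), K $$ (1,3), K $$ (2,3),
      complex_of_real (Re (K $$ (0,0))) + \<i> * complex_of_real (Re (K $$ (1,1))),
      complex_of_real (Re (K $$ (2,2))) + \<i> * complex_of_real (Re (K $$ (3,3)))))"

lemma hermitian_of_dim: "dim_row (hermitian_of x) = 4" "dim_col (hermitian_of x) = 4"
  by (simp_all add: hermitian_of_def mat_of_rows_list_def)

lemma hermitian_of_carrier [simp]: "hermitian_of x \<in> carrier_mat 4 4"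
  by (rule carrier_matI) (simp_all add: hermitian_of_dim)

lemma cayley_plus_carrier [simp]: "cayley_plus x \<in> carrier_mat 4 4"
  by (simp add: cayley_plus_def)

lemma cayley_minus_carrier [simp]: "cayley_minus x \<in> carrier_mat 4 4"
  by (simp add: cayley_minus_def minus_carrier_mat)

lemma adj_mat_carrier_4 [simp]: "A \<in> carrier_mat 4 4 \<Longrightarrow> adj_mat A \<in> carrier_mat 4 4"
  by (rule adj_mat(1))

lemma cayley_carrier [simp]: "cayley x \<in> carrier_mat 4 4"
  by (simp add: cayley_def)


lemma cayley_mult_cayley_plus:
  assumes "det (cayley_plus x) \<noteq> 0"
  shows "cayley x * cayley_plus x = cayley_minus x"
proof -
  have "cayley x * cayley_plus x =
      (1 / det (cayley_plus x)) \<cdot>\<^sub>m (cayley_minus x * (adj_mat (cayley_plus x) * cayley_plus x))"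
    by (simp add: cayley_def mult_smult_assoc_mat[of _ 4 4 _ 4] assoc_mult_mat_4)
  also have "\<dots> = cayley_minus x"
    using assms
    by (simp add: adj_mat(3)[OF cayley_plus_carrier] mult_smult_distrib[of _ 4 4 _ 4] smult_smult_mat)
  finally show ?thesis .
qed

lemma cayley_eqI:
  assumes "det (cayley_plus x) \<noteq> 0" "D \<in> carrier_mat 4 4" "D * cayley_plus x = cayley_minus x"
  shows "cayley x = D"
  using det_nonzero_mult_right_cancel[of "cayley_plus x" 4 "cayley x" 4 D] assms cayley_mult_cayley_plus
  by simp

lemma adjoint4_carrier [simp]: "U \<in> carrier_mat 4 4 \<Longrightarrow> adjoint4 U \<in> carrier_mat 4 4"
  by (simp add: adjoint4_def)

lemma adjoint4_mult:
  "A \<in> carrier_mat 4 4 \<Longrightarrow> B \<in> carrier_mat 4 4 \<Longrightarrow> adjoint4 (A * B) = adjoint4 B * adjoint4 A"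
  by (rule eq_matI) (auto simp: adjoint4_def scalar_prod_def mult.commute intro!: sum.cong)

lemma adjoint4_cayley_plus: "adjoint4 (cayley_plus x) = cayley_minus x"
  by (rule eq_mat_4I)
    (simp_all add: all_less_4 adjoint4_def cayley_plus_def cayley_minus_def hermitian_of_def
      mat_of_rows_list_def)

lemma adjoint4_cayley_minus: "adjoint4 (cayley_minus x) = cayley_plus x"
  by (rule eq_mat_4I)
    (simp_all add: all_less_4 adjoint4_def cayley_plus_def cayley_minus_def hermitian_of_def
      mat_of_rows_list_def)

lemma cayley_plus_minus_commute: "cayley_plus x * cayley_minus x = cayley_minus x * cayley_plus x"
proof -
  have "(1\<^sub>m 4 + X) * (1\<^sub>m 4 - X) = (1\<^sub>m 4 - X) * (1\<^sub>m 4 + X)" if "X \<in> carrier_mat 4 4" for X :: "complex mat"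
    using that by (intro eq_mat_4I) (simp_all add: all_less_4 index_mult_mat_4 algebra_simps del: index_mult_mat(1))
  then show ?thesis
    unfolding cayley_plus_def cayley_minus_def by simp
qed

lemma unitary4_cayley:
  assumes plus: "det (cayley_plus x) \<noteq> 0" and minus: "det (cayley_minus x) \<noteq> 0"
  shows "unitary4 (cayley x)"
proof -
  let ?U = "cayley x" and ?V = "adjoint4 (cayley x)" and ?A = "cayley_plus x" and ?B = "cayley_minus x"
  have UA: "?U * ?A = ?B"
    using cayley_mult_cayley_plus[OF plus] .
  have BV: "?B * ?V = ?A"
    using arg_cong[OF UA, of adjoint4] by (simp add: adjoint4_mult adjoint4_cayley_plus adjoint4_cayley_minus)
  have "?B * (?V * ?U) * ?A = (?B * ?V) * (?U * ?A)"
    by (simp add: assoc_mult_mat_4)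
  also have "\<dots> = ?B * ?A"
    unfolding BV UA by (rule cayley_plus_minus_commute)
  finally have "?B * (?V * ?U) * ?A = ?B * 1\<^sub>m 4 * ?A"
    by simp
  then have "?B * (?V * ?U) = ?B * 1\<^sub>m 4"
    by (rule det_nonzero_mult_right_cancel[where m = 4, OF cayley_plus_carrier _ _ plus, rotated 2]) simp_all
  then have "?V * ?U = 1\<^sub>m 4"
    by (rule det_nonzero_mult_left_cancel[where m = 4, OF cayley_minus_carrier _ _ minus, rotated 2]) simp_all
  then have "?U * ?V = 1\<^sub>m 4"
    by (rule mat_mult_left_right_inverse[OF adjoint4_carrier[OF cayley_carrier] cayley_carrier])
  then show ?thesis
    unfolding unitary4_def by simp
qed

lemma cayley_plus_add_minus: "cayley_plus x + cayley_minus x = 2 \<cdot>\<^sub>m 1\<^sub>m 4"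
  by (rule eq_matI) (auto simp: cayley_plus_def cayley_minus_def hermitian_of_dim)

lemma det_one_plus_cayley:
  assumes plus: "det (cayley_plus x) \<noteq> 0"
  shows "det (1\<^sub>m 4 + cayley x) \<noteq> 0"
proof -
  have "(1\<^sub>m 4 + cayley x) * cayley_plus x = cayley_plus x + cayley x * cayley_plus x"
    by (simp add: add_mult_distrib_mat[of _ 4 4 _ _ 4])
  also have "\<dots> = 2 \<cdot>\<^sub>m 1\<^sub>m 4"
    by (simp add: cayley_mult_cayley_plus[OF plus] cayley_plus_add_minus)
  finally have "det (1\<^sub>m 4 + cayley x) * det (cayley_plus x) = 16"
    using det_mult[of "1\<^sub>m 4 + cayley x" 4 "cayley_plus x"] by simp
  then show ?thesis by auto
qed

lemma one_plus_cayley_mult_hermitian_of: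
  assumes plus: "det (cayley_plus x) \<noteq> 0"
  shows "(1\<^sub>m 4 + cayley x) * hermitian_of x = (- \<i>) \<cdot>\<^sub>m (1\<^sub>m 4 - cayley x)"
proof (rule eq_matI)
  let ?U = "cayley x" and ?H = "hermitian_of x"
  fix i j assume "i < dim_row ((- \<i>) \<cdot>\<^sub>m (1\<^sub>m 4 - ?U))" "j < dim_col ((- \<i>) \<cdot>\<^sub>m (1\<^sub>m 4 - ?U))"
  then have ij: "i < 4" "j < 4"
    using carrier_matD[OF cayley_carrier] by auto
  have "(?U * cayley_plus x) $$ (i,j) = cayley_minus x $$ (i,j)"
    by (simp add: cayley_mult_cayley_plus[OF plus])
  then have entry: "?U $$ (i,j) + \<i> * (?U * ?H) $$ (i,j) = 1\<^sub>m 4 $$ (i,j) - \<i> * ?H $$ (i,j)"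
    using ij by (simp add: cayley_plus_def cayley_minus_def mult_add_distrib_mat[of _ 4 4 _ 4]
        mult_smult_distrib[of _ 4 4 _ 4] hermitian_of_dim carrier_matD[OF cayley_carrier])
  have "(?U * ?H) $$ (i,j) = - \<i> * (1\<^sub>m 4 $$ (i,j) - \<i> * ?H $$ (i,j) - ?U $$ (i,j))"
    using arg_cong[OF entry, of "\<lambda>t. - \<i> * (t - ?U $$ (i,j))"] by (simp add: algebra_simps)
  then show "((1\<^sub>m 4 + ?U) * ?H) $$ (i,j) = ((- \<i>) \<cdot>\<^sub>m (1\<^sub>m 4 - ?U)) $$ (i,j)"
    using ij by (simp add: add_mult_distrib_mat[of _ 4 4 _ _ 4] algebra_simps hermitian_of_dim
        carrier_matD[OF cayley_carrier])
qed (simp_all add: hermitian_of_dim carrier_matD[OF cayley_carrier])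

lemma inverse_cayley_cayley:
  assumes plus: "det (cayley_plus x) \<noteq> 0"
  shows "inverse_cayley (cayley x) = hermitian_of x"
proof -
  let ?U = "cayley x" and ?P = "1\<^sub>m 4 + cayley x"
  have det_P: "det ?P \<noteq> 0"
    using det_one_plus_cayley[OF plus] .
  have "?P * inverse_cayley ?U = (- \<i> / det ?P) \<cdot>\<^sub>m ((?P * adj_mat ?P) * (1\<^sub>m 4 - ?U))"
    by (simp add: inverse_cayley_def mult_smult_distrib[of _ 4 4 _ 4] assoc_mult_mat_4 minus_carrier_mat)
  also have "\<dots> = (- \<i>) \<cdot>\<^sub>m (1\<^sub>m 4 - ?U)"
    using det_P
    by (simp add: adj_mat(2)[of ?P 4] mult_smult_assoc_mat[of _ 4 4 _ 4] smult_smult_mat minus_carrier_mat)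
  also have "\<dots> = ?P * hermitian_of x"
    using one_plus_cayley_mult_hermitian_of[OF plus] by simp
  finally show ?thesis
    by (rule det_nonzero_mult_left_cancel[where n = 4 and m = 4, OF _ _ _ det_P, rotated 3])
      (simp_all add: inverse_cayley_def minus_carrier_mat)
qed

lemma cayley_coords_cayley:
  assumes "det (cayley_plus x) \<noteq> 0"
  shows "cayley_coords (cayley x) = x"
proof -
  have "cayley_coords (cayley x) =
      (h01 x, h02 x, h03 x, h12 x, h13 x, h23 x, hdiag01 x, hdiag23 x)"
    unfolding cayley_coords_def inverse_cayley_cayley[OF assms]
    by (simp add: hermitian_of_def mat_of_rows_list_def complex_eq_iff)
  then show ?thesis
    by (simp add: hcoords_defs)
qed

lemma bounded_linear_hcoords:
  "bounded_linear h01" "bounded_linear h02" "bounded_linear h03" "bounded_linear h12"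
  "bounded_linear h13" "bounded_linear h23" "bounded_linear hdiag01" "bounded_linear hdiag23"
  unfolding hcoords_defs[abs_def]
  by (auto intro!: bounded_linear_compose[OF bounded_linear_fst] bounded_linear_compose[OF bounded_linear_snd]
      bounded_linear_fst bounded_linear_snd simp: o_def)

lemma mat_differentiable_hermitian_of: "mat_differentiable UNIV 4 hermitian_of"
proof -
  note compose_rules =
    differentiable_compose_bounded_linear[OF bounded_linear_of_real]
    differentiable_compose_bounded_linear[OF bounded_linear_Re]
    differentiable_compose_bounded_linear[OF bounded_linear_Im]
    differentiable_compose_bounded_linear[OF bounded_linear_cnj]
  have "\<forall>i<4. \<forall>j<4. (\<lambda>y. hermitian_of y $$ (i,j)) differentiable (at y)" for y
    unfolding all_less_4
    by (simp add: hermitian_of_def mat_of_rows_list_def compose_rules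
        bounded_linear_hcoords[THEN bounded_linear_imp_differentiable])
  then show ?thesis
    by (simp add: mat_differentiable_def)
qed

lemma mat_differentiable_cayley_plus: "mat_differentiable UNIV 4 cayley_plus"
  unfolding cayley_plus_def[abs_def]
  by (intro mat_differentiable_add mat_differentiable_const mat_differentiable_smult
      mat_differentiable_hermitian_of) auto

lemma mat_differentiable_cayley_minus: "mat_differentiable UNIV 4 cayley_minus"
  unfolding cayley_minus_def[abs_def]
  by (intro mat_differentiable_diff mat_differentiable_const mat_differentiable_smult
      mat_differentiable_hermitian_of) auto

text \<open>For Hermitian \<open>H\<close> both determinants are nonzero anyway; restricting to this open set
  spares us the proof.\<close>

definition cayley_domain :: "hcoords set" where
  "cayley_domain = {x. det (cayley_plus x) \<noteq> 0 \<and> det (cayley_minus x) \<noteq> 0}"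

lemma open_cayley_domain: "open cayley_domain"
proof -
  have domain: "cayley_domain = {x. det (cayley_plus x) \<noteq> 0} \<inter> {x. det (cayley_minus x) \<noteq> 0}"
    by (auto simp: cayley_domain_def)
  show ?thesis
    unfolding domain by (intro open_Int open_Collect_neq continuous_on_const
        continuous_on_det[OF mat_differentiable_cayley_plus]
        continuous_on_det[OF mat_differentiable_cayley_minus])
qed

lemma mat_differentiable_cayley: "mat_differentiable cayley_domain 4 cayley"
proof -
  have "mat_differentiable cayley_domain 4 (\<lambda>x. cayley_minus x * adj_mat (cayley_plus x))"
    by (rule mat_differentiable_subset[OF _ subset_UNIV])
      (intro mat_differentiable_mult mat_differentiable_adj_mat mat_differentiable_cayley_plus
        mat_differentiable_cayley_minus)
  moreover have "(\<lambda>x. 1 / det (cayley_plus x)) differentiable (at x)" if "x \<in> cayley_domain" for x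
    using that differentiable_det[OF mat_differentiable_cayley_plus]
    by (simp add: cayley_domain_def)
  ultimately show ?thesis
    unfolding cayley_def[abs_def] by (rule mat_differentiable_smult)
qed

section \<open>Generic unitaries\<close>

definition generic_points :: "hcoords set" where
  "generic_points = {x \<in> cayley_domain. mat_trace (gamma (cayley x)) \<noteq> 0 \<and>
     mat_trace (gamma (cayley x)) ^ 2 \<noteq> 4 * mat_trace (gamma (cayley x) * gamma (cayley x))}"

lemma open_generic_points: "open generic_points"
proof -
  let ?t = "\<lambda>x. mat_trace (gamma (cayley x))"
  let ?d = "\<lambda>x. ?t x ^ 2 - 4 * mat_trace (gamma (cayley x) * gamma (cayley x))"
  have gamma: "mat_differentiable cayley_domain 4 (\<lambda>x. gamma (cayley x))"
    unfolding gamma_def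
    by (intro mat_differentiable_mult mat_differentiable_transpose mat_differentiable_cayley
        mat_differentiable_const) simp_all
  have "?t differentiable (at x)" "?d differentiable (at x)" if "x \<in> cayley_domain" for x
    using that differentiable_mat_trace[OF gamma] differentiable_mat_trace[OF mat_differentiable_mult[OF gamma gamma]]
    by simp_all
  then have continuous: "continuous_on cayley_domain ?t" "continuous_on cayley_domain ?d"
    by (simp_all add: continuous_on_differentiable_at)
  have "generic_points = (cayley_domain \<inter> ?t -` (- {0})) \<inter> (cayley_domain \<inter> ?d -` (- {0}))"
    by (auto simp: generic_points_def)
  also have "open \<dots>"
    by (intro open_Int continuous_open_preimage continuous open_cayley_domain open_Compl closed_singleton)
  finally show ?thesis .
qed

definition diag_last :: "complex \<Rightarrow> complex mat" where
  "diag_last a = Matrix.mat 4 4 (\<lambda>(i,j). if i = j then (if i = 3 then a else 1) else 0)"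

lemma det_diag_last: "det (diag_last a) = a"
proof -
  have "upper_triangular (diag_last a)"
    by (auto simp: upper_triangular_def diag_last_def)
  then have "det (diag_last a) = prod_list (diag_mat (diag_last a))"
    by (rule det_upper_triangular[where n = 4]) (simp add: diag_last_def)
  also have "\<dots> = a"
    by (simp add: diag_mat_def diag_last_def upt_rec)
  finally show ?thesis .
qed

text \<open>The sample point encodes \<open>H = diag(0, 0, 0, -1)\<close>, whose Cayley transform
  \<open>diag(1, 1, 1, i)\<close> has \<open>tr \<gamma> = 2 + 2i\<close> and \<open>tr \<gamma>\<^sup>2 = 0\<close>.\<close>

definition sample_point :: hcoords where
  "sample_point = (0, 0, 0, 0, 0, 0, 0, - \<i>)"

lemma cayley_plus_sample_point: "cayley_plus sample_point = diag_last (1 - \<i>)"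
  by (rule eq_mat_4I)
    (simp_all add: all_less_4 cayley_plus_def hermitian_of_def mat_of_rows_list_def
      sample_point_def diag_last_def hcoords_defs)

lemma cayley_minus_sample_point: "cayley_minus sample_point = diag_last (1 + \<i>)"
  by (rule eq_mat_4I)
    (simp_all add: all_less_4 cayley_minus_def hermitian_of_def mat_of_rows_list_def
      sample_point_def diag_last_def hcoords_defs)

lemma sample_point_in_cayley_domain: "sample_point \<in> cayley_domain"
  by (simp add: cayley_domain_def cayley_plus_sample_point cayley_minus_sample_point
      det_diag_last complex_eq_iff)

lemma cayley_sample_point: "cayley sample_point = diag_last \<i>"
proof (rule cayley_eqI)
  show "det (cayley_plus sample_point) \<noteq> 0"
    using sample_point_in_cayley_domain by (simp add: cayley_domain_def)
  show "diag_last \<i> \<in> carrier_mat 4 4"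
    by (simp add: diag_last_def)
  show "diag_last \<i> * cayley_plus sample_point = cayley_minus sample_point"
    unfolding cayley_plus_sample_point cayley_minus_sample_point
    by (rule eq_mat_4I)
      (simp_all add: all_less_4 index_mult_mat_4 diag_last_def algebra_simps del: index_mult_mat(1))
qed

lemma sample_point_generic: "sample_point \<in> generic_points"
proof -
  have "mat_trace (gamma (diag_last \<i>)) = 2 + 2 * \<i>"
    "mat_trace (gamma (diag_last \<i>) * gamma (diag_last \<i>)) = 0"
    by (simp_all add: mat_trace_def gamma_def sum_lessThan_4 index_mult_mat_4 diag_last_def
        gate_entry_simps del: index_mult_mat(1))
  then show ?thesis
    using sample_point_in_cayley_domain
    by (simp add: generic_points_def cayley_sample_point complex_eq_iff power2_eq_square)
qed

lemma mat_differentiable_inverse_cayley: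
  assumes F: "mat_differentiable UNIV 4 F"
  shows "mat_differentiable {y. det (1\<^sub>m 4 + F y) \<noteq> 0} 4 (\<lambda>y. inverse_cayley (F y))"
proof -
  have plus: "mat_differentiable UNIV 4 (\<lambda>y. 1\<^sub>m 4 + F y)"
    by (intro mat_differentiable_add mat_differentiable_const F) simp
  have minus: "mat_differentiable UNIV 4 (\<lambda>y. 1\<^sub>m 4 - F y)"
    by (intro mat_differentiable_diff mat_differentiable_const F) simp
  have "mat_differentiable {y. det (1\<^sub>m 4 + F y) \<noteq> 0} 4 (\<lambda>y. adj_mat (1\<^sub>m 4 + F y) * (1\<^sub>m 4 - F y))"
    by (rule mat_differentiable_subset[OF _ subset_UNIV])
      (intro mat_differentiable_mult mat_differentiable_adj_mat plus minus)
  moreover have "(\<lambda>y. - \<i> / det (1\<^sub>m 4 + F y)) differentiable (at y)"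
    if "y \<in> {y. det (1\<^sub>m 4 + F y) \<noteq> 0}" for y
    using that differentiable_det[OF plus] by simp
  ultimately show ?thesis
    unfolding inverse_cayley_def by (rule mat_differentiable_smult)
qed

lemma differentiable_cayley_coords:
  assumes K: "mat_differentiable S 4 (\<lambda>y. inverse_cayley (F y))" and y: "y \<in> S"
  shows "(\<lambda>y. cayley_coords (F y)) differentiable (at y)"
proof -
  note entry = mat_differentiable_entry[OF K y]
  note compose_rules =
    differentiable_compose_bounded_linear[OF bounded_linear_of_real]
    differentiable_compose_bounded_linear[OF bounded_linear_Re]
  show ?thesis
    unfolding cayley_coords_def Let_def
    by (intro differentiable_Pair differentiable_add differentiable_mult differentiable_const
        compose_rules entry) simp_all
qed

definition rotation_coords :: "gate list \<Rightarrow> hcoords set" where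
  "rotation_coords c =
     (\<lambda>y. cayley_coords (circuit_family c y)) ` {y. det (1\<^sub>m 4 + circuit_family c y) \<noteq> 0}"

lemma negligible_rotation_coords: "negligible (rotation_coords c)"
  unfolding rotation_coords_def
proof (rule negligible_differentiable_image_lowdim)
  show "DIM(real^15) < DIM(hcoords)"
    by simp
  show "(\<lambda>y. cayley_coords (circuit_family c y)) differentiable_on {y. det (1\<^sub>m 4 + circuit_family c y) \<noteq> 0}"
    using differentiable_cayley_coords[OF mat_differentiable_inverse_cayley[OF mat_differentiable_circuit_family]]
    by (auto simp: differentiable_on_def intro: differentiable_at_withinI)
qed

definition few_rotation_coords :: "hcoords set" where
  "few_rotation_coords = (\<Union>c \<in> lists (range (\<lambda>g. set_angle g 0)). rotation_coords c)"

lemma negligible_few_rotation_coords: "negligible few_rotation_coords"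
  unfolding few_rotation_coords_def
  by (intro negligible_countable_Union countable_image countable_lists countable_finite
      finite_erased_gates) (auto simp: negligible_rotation_coords)

lemma cayley_coords_few_rotations:
  assumes "implements_up_to_phase c U" "length (filter (\<lambda>g. \<not> is_cnot g) c) \<le> 14"
    and "det (1\<^sub>m 4 + U) \<noteq> 0"
  shows "cayley_coords U \<in> few_rotation_coords"
proof -
  obtain y where y: "circuit_family (map (\<lambda>g. set_angle g 0) c) y = U"
    using circuit_family_covers[OF assms(1,2)] ..
  then have "cayley_coords U \<in> rotation_coords (map (\<lambda>g. set_angle g 0) c)"
    using assms(3) unfolding rotation_coords_def by force
  then show ?thesis
    unfolding few_rotation_coords_def by (rule UN_I[rotated]) auto
qed

lemma generic_point_outside_few_rotation_coords: "\<exists>x \<in> generic_points. x \<notin> few_rotation_coords"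
proof (rule ccontr)
  assume "\<not> ?thesis"
  then have "negligible generic_points"
    using negligible_subset[OF negligible_few_rotation_coords] by blast
  then show False
    using open_not_negligible[OF open_generic_points] sample_point_generic by auto
qed

theorem theorem2:
  shows "\<exists>U. unitary4 U \<and>
           (\<forall>c. implements_up_to_phase c U \<longrightarrow>
                 length c \<ge> 17 \<and>
                 length (filter (\<lambda>g. \<not> is_cnot g) c) \<ge> 15 \<and>
                 length (filter is_cnot c) \<ge> 2)"
proof -
  obtain x where generic: "x \<in> generic_points" and outside: "x \<notin> few_rotation_coords"
    using generic_point_outside_few_rotation_coords by blast
  then have domain: "det (cayley_plus x) \<noteq> 0" "det (cayley_minus x) \<noteq> 0"
    by (simp_all add: generic_points_def cayley_domain_def)
  show ?thesis
  proof (intro exI conjI allI impI)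
    show "unitary4 (cayley x)"
      using unitary4_cayley[OF domain] .
    fix c assume impl: "implements_up_to_phase c (cayley x)"
    show cnots: "length (filter is_cnot c) \<ge> 2"
      using two_cnots_needed[OF cayley_carrier _ _ impl] generic by (simp add: generic_points_def)
    show rotations: "length (filter (\<lambda>g. \<not> is_cnot g) c) \<ge> 15"
    proof (rule ccontr)
      assume "\<not> ?thesis"
      then have "cayley_coords (cayley x) \<in> few_rotation_coords"
        using cayley_coords_few_rotations[OF impl] det_one_plus_cayley[OF domain(1)] by simp
      then show False
        using outside cayley_coords_cayley[OF domain(1)] by simp
    qed
    show "length c \<ge> 17"
      using cnots rotations sum_length_filter_compl[of is_cnot c] by linarith
  qed
qed

end
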